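(* Let $b\in\mathbb{R}$ and let $\mathbf{y}(t),\mathbf{x}(t),\mathbf{z}(t)$ be differentiable curves in $\mathbb{R}^3$; set $\mathbf{b}=(0,0,b)^T$. For $\xi=(\xi^1,\xi^2,\xi^3)^T\in\mathbb{R}^3$ let $\hat\xi=\sum_{\alpha=1}^3\xi^\alpha\sigma^\alpha$, where $\sigma^1=\tfrac12\begin{pmatrix}0&\mathrm{i}\\ \mathrm{i}&0\end{pmatrix}$, $\sigma^2=\tfrac12\begin{pmatrix}0&1\\-1&0\end{pmatrix}$, $\sigma^3=\tfrac12\begin{pmatrix}\mathrm{i}&0\\0&-\mathrm{i}\end{pmatrix}$, and put $\mathcal{B}=\hat{\mathbf b}$, $\mathcal{Y}=\hat{\mathbf y}$, $\mathcal{X}=\hat{\mathbf x}$, $\mathcal{Z}=\hat{\mathbf z}$, $$\mathcal{L}(\lambda)=\mathcal{B}+\frac{\mathcal{Y}}{\lambda}+\frac{\mathcal{X}}{\lambda^2}+\frac{\mathcal{Z}}{\lambda^3},\qquad \mathcal{M}(\lambda)=\frac{\mathcal{X}}{\lambda}+\frac{\mathcal{Z}}{\lambda^2}.$$ Then the system $$\dot{\mathbf y}=\mathbf b\wedge\mathbf x,\qquad \dot{\mathbf x}=\mathbf y\wedge\mathbf x+\mathbf b\wedge\mathbf z,\qquad \dot{\mathbf z}=\mathbf y\wedge\mathbf z$$ holds if and only if $\frac{d}{dt}\mathcal{L}(\lambda)=[\mathcal{M}(\lambda),\mathcal{L}(\lambda)]$ for all $\lambda\in\mathbb{C}\setmi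nus\{0\}$.
   Context: $\wedge$ is the vector (cross) product on $\mathbb{R}^3$ and $[\cdot,\cdot]$ the matrix commutator. (This system is the Hamiltonian flow of $\tfrac12\langle\mathbf y,\mathbf y\rangle+\langle\mathbf b,\mathbf x\rangle$ for the Lie–Poisson brackets $\{y^\alpha,y^\beta\}=\epsilon^{\alpha\beta\gamma}y^\gamma$, $\{y^\alpha,x^\beta\}=\epsilon^{\alpha\beta\gamma}x^\gamma$, $\{y^\alpha,z^\beta\}=\epsilon^{\alpha\beta\gamma}z^\gamma$, $\{x^\alpha,x^\beta\}=\epsilon^{\alpha\beta\gamma}z^\gamma$, all other brackets zero.) *)

theory Defs
  imports "HOL-Analysis.Analysis"
begin

definition sigma1 :: "complex^2^2" where
  "sigma1 = vector [vector [0, \<i>/2], vector [\<i>/2, 0]]"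

definition sigma2 :: "complex^2^2" where
  "sigma2 = vector [vector [0, 1/2], vector [-1/2, 0]]"

definition sigma3 :: "complex^2^2" where
  "sigma3 = vector [vector [\<i>/2, 0], vector [0, -\<i>/2]]"

definition hat :: "real^3 \<Rightarrow> complex^2^2" where
  "hat \<xi> = (\<xi> $ 1) *\<^sub>R sigma1 + (\<xi> $ 2) *\<^sub>R sigma2 + (\<xi> $ 3) *\<^sub>R sigma3"

definition cmat_scale :: "complex \<Rightarrow> complex^2^2 \<Rightarrow> complex^2^2" where
  "cmat_scale c M = (\<chi> i j. c * M $ i $ j)"

definition commutator :: "complex^2^2 \<Rightarrow> complex^2^2 \<Rightarrow> complex^2^2" where
  "commutator A B = A ** B - B ** A"

definition bvec :: "real \<Rightarrow> real^3" where
  "bvec b = vector [0, 0, b]"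

definition Lax_L :: "real \<Rightarrow> real^3 \<Rightarrow> real^3 \<Rightarrow> real^3 \<Rightarrow> complex \<Rightarrow> complex^2^2" where
  "Lax_L b y x z lam = hat (bvec b) + cmat_scale (1/lam) (hat y)
     + cmat_scale (1/lam^2) (hat x) + cmat_scale (1/lam^3) (hat z)"

definition Lax_M :: "real^3 \<Rightarrow> real^3 \<Rightarrow> complex \<Rightarrow> complex^2^2" where
  "Lax_M x z lam = cmat_scale (1/lam) (hat x) + cmat_scale (1/lam^2) (hat z)"

end

theory Submission
  imports Defs
begin

text \<open>The map \<open>hat\<close> is real linear, injective, and turns the cross product into the
  (reversed) matrix commutator: \<open>[hat u, hat v] = hat (v \<times> u)\<close>. Hence both \<open>d/dt L(\<lambda>)\<close> and
  \<open>[M(\<lambda>), L(\<lambda>)]\<close> are of the form \<open>hat a / \<lambda> + hat b / \<lambda>\<^sup>2 + hat c / \<lambda>\<^sup>3\<close> (in the commutator,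
  the \<open>1 / \<lambda>\<^sup>4\<close> and \<open>1 / \<lambda>\<^sup>5\<close> terms cancel by antisymmetry of \<open>\<times>\<close>), and the Lax equation for all
  \<open>\<lambda> \<noteq> 0\<close> amounts to comparing the three coefficients, which is the system.\<close>

lemma mat2_eqI:
  fixes A B :: "'a^2^2"
  assumes "A $ 1 $ 1 = B $ 1 $ 1" "A $ 1 $ 2 = B $ 1 $ 2" "A $ 2 $ 1 = B $ 2 $ 1" "A $ 2 $ 2 = B $ 2 $ 2"
  shows "A = B"
  using assms by (simp add: vec_eq_iff forall_2)

lemma cmat_scale_nth [simp]: "cmat_scale c M $ i $ j = c * M $ i $ j"
  by (simp add: cmat_scale_def)

lemma cmat_scale_0 [simp]: "cmat_scale c 0 = 0"
  by (simp add: vec_eq_iff)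

lemma cmat_scale_add: "cmat_scale c (A + B) = cmat_scale c A + cmat_scale c B"
  by (simp add: vec_eq_iff distrib_left)

lemma cmat_scale_minus: "cmat_scale c (- A) = - cmat_scale c A"
  by (simp add: vec_eq_iff)

lemma cmat_scale_diff: "cmat_scale c (A - B) = cmat_scale c A - cmat_scale c B"
  by (simp add: vec_eq_iff right_diff_distrib)

lemma cmat_scale_cmat_scale: "cmat_scale a (cmat_scale c M) = cmat_scale (a * c) M"
  by (simp add: vec_eq_iff)

lemma linear_cmat_scale: "linear (cmat_scale c)"
  by (rule linearI) (simp_all add: vec_eq_iff cmat_scale_add scaleR_conv_of_real)

lemma commutator_add_left: "commutator (A + B) C = commutator A C + commutator B C"
  by (simp add: commutator_def vec_eq_iff matrix_matrix_mult_def sum.distrib algebra_simps)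

lemma commutator_add_right: "commutator A (B + C) = commutator A B + commutator A C"
  by (simp add: commutator_def vec_eq_iff matrix_matrix_mult_def sum.distrib algebra_simps)

lemma commutator_cmat_scale_left: "commutator (cmat_scale c A) B = cmat_scale c (commutator A B)"
  by (simp add: commutator_def matrix_matrix_mult_def vec_eq_iff sum_distrib_left algebra_simps)

lemma commutator_cmat_scale_right: "commutator A (cmat_scale c B) = cmat_scale c (commutator A B)"
  by (simp add: commutator_def matrix_matrix_mult_def vec_eq_iff sum_distrib_left algebra_simps)

lemma hat_nth:
  "hat v $ 1 $ 1 = \<i> * v$3 / 2"
  "hat v $ 1 $ 2 = (\<i> * v$1 + v$2) / 2"
  "hat v $ 2 $ 1 = (\<i> * v$1 - v$2) / 2"
  "hat v $ 2 $ 2 = - \<i> * v$3 / 2"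
  by (simp_all add: hat_def sigma1_def sigma2_def sigma3_def vector_scaleR_component;
      simp add: scaleR_conv_of_real field_simps)+

lemma linear_hat: "linear hat"
  by (rule linearI) (simp_all add: hat_def algebra_simps)

lemmas hat_add = linear_add[OF linear_hat]
   and hat_minus = linear_neg[OF linear_hat]
   and hat_diff = linear_diff[OF linear_hat]
   and hat_0 [simp] = linear_0[OF linear_hat]

lemma hat_eq_0_iff [simp]: "hat v = 0 \<longleftrightarrow> v = 0"
proof
  assume "hat v = 0"
  then have "hat v $ 1 $ 1 = 0" "hat v $ 1 $ 2 = 0" by simp_all
  then show "v = 0"
    by (simp add: hat_nth complex_eq_iff vec_eq_iff forall_3)
qed simp

lemma commutator_hat: "commutator (hat u) (hat v) = hat (cross3 v u)"
  by (rule mat2_eqI)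
     (simp_all add: commutator_def matrix_matrix_mult_def sum_2 hat_nth cross_components field_simps)

definition principal_part :: "complex \<Rightarrow> real^3 \<Rightarrow> real^3 \<Rightarrow> real^3 \<Rightarrow> complex^2^2" where
  "principal_part lam u v w =
     cmat_scale (1/lam) (hat u) + cmat_scale (1/lam^2) (hat v) + cmat_scale (1/lam^3) (hat w)"

lemma Lax_L_eq: "Lax_L b y x z lam = hat (bvec b) + principal_part lam y x z"
  by (simp add: Lax_L_def principal_part_def add.assoc)

lemma commutator_Lax_M_Lax_L:
  "commutator (Lax_M x z lam) (Lax_L b y x z lam)
     = principal_part lam (cross3 (bvec b) x) (cross3 y x + cross3 (bvec b) z) (cross3 y z)"
  unfolding Lax_M_def Lax_L_def principal_part_def
  by (simp only: commutator_add_left commutator_add_right commutator_cmat_scale_left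
      commutator_cmat_scale_right commutator_hat cmat_scale_cmat_scale cross_refl hat_0 cmat_scale_0
      add_0_right cross_skew[of z x] hat_minus cmat_scale_minus hat_add cmat_scale_add)
     (simp add: eval_nat_numeral mult_ac)

lemma has_vector_derivative_principal_part:
  assumes "(u has_vector_derivative u') (at t within S)"
      and "(v has_vector_derivative v') (at t within S)"
      and "(w has_vector_derivative w') (at t within S)"
  shows "((\<lambda>s. principal_part lam (u s) (v s) (w s)) has_vector_derivative principal_part lam u' v' w')
           (at t within S)"
proof -
  have scaled_hat: "((\<lambda>s. cmat_scale c (hat (f s))) has_vector_derivative cmat_scale c (hat f'))
                      (at t within S)"
    if "(f has_vector_derivative f') (at t within S)" for c f f'
  proof -
    have "bounded_linear (cmat_scale c \<circ> hat)"
      using linear_compose[OF linear_hat linear_cmat_scale] by (simp add: linear_conv_bounded_linear)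
    from bounded_linear.has_vector_derivative[OF this that] show ?thesis
      by (simp add: o_def)
  qed
  show ?thesis
    unfolding principal_part_def by (intro has_vector_derivative_add scaled_hat assms)
qed

lemma vector_derivative_Lax_L:
  assumes "y differentiable (at t)" "x differentiable (at t)" "z differentiable (at t)"
  shows "vector_derivative (\<lambda>s. Lax_L b (y s) (x s) (z s) lam) (at t)
           = principal_part lam (vector_derivative y (at t)) (vector_derivative x (at t))
               (vector_derivative z (at t))"
proof (rule vector_derivative_at)
  have "((\<lambda>s. hat (bvec b) + principal_part lam (y s) (x s) (z s)) has_vector_derivative
          0 + principal_part lam (vector_derivative y (at t)) (vector_derivative x (at t))
                (vector_derivative z (at t))) (at t)"
    by (intro has_vector_derivative_add has_vector_derivative_const has_vector_derivative_principal_part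
        assms[unfolded vector_derivative_works])
  then show "((\<lambda>s. Lax_L b (y s) (x s) (z s) lam) has_vector_derivative
          principal_part lam (vector_derivative y (at t)) (vector_derivative x (at t))
            (vector_derivative z (at t))) (at t)"
    by (simp add: Lax_L_eq)
qed

lemma laurent_coeffs_eq_0:
  fixes p q r :: "'a::field_char_0"
  assumes "\<forall>lam. lam \<noteq> 0 \<longrightarrow> p / lam + q / lam^2 + r / lam^3 = 0"
  shows "p = 0 \<and> q = 0 \<and> r = 0"
proof -
  have cubic: "p * lam^2 + q * lam + r = 0" if "lam \<noteq> 0" for lam
  proof -
    have "p * lam^2 + q * lam + r = lam^3 * (p / lam + q / lam^2 + r / lam^3)"
      using that by (simp add: field_simps power2_eq_square power3_eq_cube)
    also have "\<dots> = 0"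
      using assms that by simp
    finally show ?thesis .
  qed
  have 1: "p + q + r = 0" and 2: "p - q + r = 0" and 3: "p * 4 + q * 2 + r = 0"
    using cubic[of 1] cubic[of "-1"] cubic[of 2] by simp_all
  have "2 * q = (p + q + r) - (p - q + r)" and "3 * p + q = (p * 4 + q * 2 + r) - (p + q + r)"
    by (simp_all add: algebra_simps)
  then have "q = 0" and "p = 0"
    unfolding 1 2 3 by simp_all
  with 1 show ?thesis
    by simp
qed

lemma principal_part_eq_0_iff:
  "(\<forall>lam. lam \<noteq> 0 \<longrightarrow> principal_part lam u v w = 0) \<longleftrightarrow> u = 0 \<and> v = 0 \<and> w = 0"
proof
  assume vanish: "\<forall>lam. lam \<noteq> 0 \<longrightarrow> principal_part lam u v w = 0"
  have "hat u $ i $ j = 0 \<and> hat v $ i $ j = 0 \<and> hat w $ i $ j = 0" for i j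
  proof (rule laurent_coeffs_eq_0, intro allI impI)
    fix lam :: complex
    assume "lam \<noteq> 0"
    then have "principal_part lam u v w $ i $ j = 0"
      using vanish by simp
    then show "hat u $ i $ j / lam + hat v $ i $ j / lam^2 + hat w $ i $ j / lam^3 = 0"
      by (simp add: principal_part_def)
  qed
  then show "u = 0 \<and> v = 0 \<and> w = 0"
    by (metis hat_eq_0_iff mat2_eqI zero_index)
qed (simp add: principal_part_def)

lemma principal_part_eq_iff:
  "(\<forall>lam. lam \<noteq> 0 \<longrightarrow> principal_part lam u v w = principal_part lam u' v' w')
     \<longleftrightarrow> u = u' \<and> v = v' \<and> w = w'"
proof -
  have "principal_part lam u v w - principal_part lam u' v' w'
          = principal_part lam (u - u') (v - v') (w - w')" for lam
    by (simp add: principal_part_def hat_diff cmat_scale_diff)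
  then show ?thesis
    using principal_part_eq_0_iff[of "u - u'" "v - v'" "w - w'"]
    by (metis (no_types, lifting) eq_iff_diff_eq_0)
qed

theorem proposition4:
  fixes b :: real and y x z :: "real \<Rightarrow> real^3"
  assumes dy: "\<And>t. y differentiable (at t)"
      and dx: "\<And>t. x differentiable (at t)"
      and dz: "\<And>t. z differentiable (at t)"
  shows "(\<forall>t. vector_derivative y (at t) = cross3 (bvec b) (x t)
             \<and> vector_derivative x (at t) = cross3 (y t) (x t) + cross3 (bvec b) (z t)
             \<and> vector_derivative z (at t) = cross3 (y t) (z t))
     \<longleftrightarrow>
         (\<forall>t. \<forall>lam::complex. lam \<noteq> 0 \<longrightarrow>
             vector_derivative (\<lambda>s. Lax_L b (y s) (x s) (z s) lam) (at t)
               = commutator (Lax_M (x t) (z t) lam) (Lax_L b (y t) (x t) (z t) lam))"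
  by (simp add: vector_derivative_Lax_L[OF dy dx dz] commutator_Lax_M_Lax_L principal_part_eq_iff)

end
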